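(* Let $\mathcal{T}$ be a $\operatorname{Hom}$-finite Krull–Schmidt triangulated category over an algebraically closed field and $\mathcal{I}$ an ideal. Every $\mathcal{I}$-source map is left $\mathcal{I}$-irreducible, and every $\mathcal{I}$-sink map is right $\mathcal{I}$-irreducible.
   Context: Composition of $h_1:X\to U$, $h_2:U\to Y$ is $h_2h_1$. An ideal: subgroups $\mathcal{I}(X,Y)\subseteq\operatorname{Hom}(X,Y)$ closed under composition. An $\mathcal{I}$-source map of $X$ is a morphism $f:X\to M$ in $\mathcal{I}$ such that every morphism of $\mathcal{I}$ starting at $X$ factors through $f$, and which is left minimal ($gf=f$ implies $g$ invertible); $\mathcal{I}$-sink maps are dual (right minimal right $\mathcal{I}$-approximations). A morphism $h$ is left $\mathcal{I}$-irreducible if $h\in\mathcal{I}$ and for every factorization $h=h_2h_1$ with $h_1\in\mathcal{I}$, $h_2$ is a split epimorphism; it is right $\mathcal{I}$-irreducible if $h\in\mathcal{I}$ and for every factorization $h=h_2h_1$ with $h_2\in\mathcal{I}$, $h_1$ is a split monomorphism. *)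

theory Defs
  imports "HOL-Computational_Algebra.Polynomial"
begin

text \<open>A (small) category is encoded by a type of objects 'o, a type of morphisms 'm
  (every element of 'm is a morphism, with domain Dom and codomain Cod), composition
  Comp g f (= g after f, meaningful when Cod f = Dom g) and identities.  A triangulated
  structure consists of the shift (ShO on objects, ShM on morphisms) and the class Tri
  of distinguished triangles (X,Y,Z,u,v,w) with u:X->Y, v:Y->Z, w:Z->Sigma X.\<close>

record ('o, 'm, 'k) tcat =
  Dom :: "'m \<Rightarrow> 'o"
  Cod :: "'m \<Rightarrow> 'o"
  Comp :: "'m \<Rightarrow> 'm \<Rightarrow> 'm"
  Ident :: "'o \<Rightarrow> 'm"
  Add :: "'m \<Rightarrow> 'm \<Rightarrow> 'm"
  Zero :: "'o \<Rightarrow> 'o \<Rightarrow> 'm"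
  Smult :: "'k \<Rightarrow> 'm \<Rightarrow> 'm"
  ShO :: "'o \<Rightarrow> 'o"
  ShM :: "'m \<Rightarrow> 'm"
  Tri :: "('o \<times> 'o \<times> 'o \<times> 'm \<times> 'm \<times> 'm) set"

definition hom :: "('o, 'm, 'k, 'z) tcat_scheme \<Rightarrow> 'o \<Rightarrow> 'o \<Rightarrow> 'm set" where
  "hom C X Y = {f. Dom C f = X \<and> Cod C f = Y}"

definition is_category :: "('o, 'm, 'k, 'z) tcat_scheme \<Rightarrow> bool" where
  "is_category C \<longleftrightarrow>
     (\<forall>X. Ident C X \<in> hom C X X) \<and>
     (\<forall>f g. Dom C g = Cod C f \<longrightarrow> Comp C g f \<in> hom C (Dom C f) (Cod C g)) \<and>
     (\<forall>f g h. Dom C g = Cod C f \<longrightarrow> Dom C h = Cod C g \<longrightarrow>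
        Comp C h (Comp C g f) = Comp C (Comp C h g) f) \<and>
     (\<forall>f. Comp C (Ident C (Cod C f)) f = f \<and> Comp C f (Ident C (Dom C f)) = f)"

definition iso :: "('o, 'm, 'k, 'z) tcat_scheme \<Rightarrow> 'm \<Rightarrow> bool" where
  "iso C f \<longleftrightarrow> (\<exists>g \<in> hom C (Cod C f) (Dom C f).
      Comp C g f = Ident C (Dom C f) \<and> Comp C f g = Ident C (Cod C f))"

definition split_mono :: "('o, 'm, 'k, 'z) tcat_scheme \<Rightarrow> 'm \<Rightarrow> bool" where
  "split_mono C f \<longleftrightarrow> (\<exists>g \<in> hom C (Cod C f) (Dom C f). Comp C g f = Ident C (Dom C f))"

definition split_epi :: "('o, 'm, 'k, 'z) tcat_scheme \<Rightarrow> 'm \<Rightarrow> bool" where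
  "split_epi C f \<longleftrightarrow> (\<exists>g \<in> hom C (Cod C f) (Dom C f). Comp C f g = Ident C (Cod C f))"

definition is_klinear :: "('o, 'm, 'k::field, 'z) tcat_scheme \<Rightarrow> bool" where
  "is_klinear C \<longleftrightarrow> is_category C \<and>
     (\<forall>X Y. Zero C X Y \<in> hom C X Y \<and>
       (\<forall>f \<in> hom C X Y. \<forall>g \<in> hom C X Y. Add C f g \<in> hom C X Y) \<and>
       (\<forall>f \<in> hom C X Y. \<forall>c. Smult C c f \<in> hom C X Y) \<and>
       (\<forall>f \<in> hom C X Y. \<forall>g \<in> hom C X Y. Add C f g = Add C g f) \<and>
       (\<forall>f \<in> hom C X Y. \<forall>g \<in> hom C X Y. \<forall>h \<in> hom C X Y.
          Add C (Add C f g) h = Add C f (Add C g h)) \<and>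
       (\<forall>f \<in> hom C X Y. Add C f (Zero C X Y) = f) \<and>
       (\<forall>f \<in> hom C X Y. Add C f (Smult C (-1) f) = Zero C X Y) \<and>
       (\<forall>f \<in> hom C X Y. \<forall>g \<in> hom C X Y. \<forall>c.
          Smult C c (Add C f g) = Add C (Smult C c f) (Smult C c g)) \<and>
       (\<forall>f \<in> hom C X Y. \<forall>c d. Smult C (c + d) f = Add C (Smult C c f) (Smult C d f)) \<and>
       (\<forall>f \<in> hom C X Y. \<forall>c d. Smult C (c * d) f = Smult C c (Smult C d f)) \<and>
       (\<forall>f \<in> hom C X Y. Smult C 1 f = f)) \<and>
     (\<forall>X Y Z. \<forall>f \<in> hom C X Y. \<forall>g \<in> hom C Y Z. \<forall>g' \<in> hom C Y Z.
        Comp C (Add C g g') f = Add C (Comp C g f) (Comp C g' f)) \<and>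
     (\<forall>X Y Z. \<forall>f \<in> hom C X Y. \<forall>f' \<in> hom C X Y. \<forall>g \<in> hom C Y Z.
        Comp C g (Add C f f') = Add C (Comp C g f) (Comp C g f')) \<and>
     (\<forall>X Y Z. \<forall>f \<in> hom C X Y. \<forall>g \<in> hom C Y Z. \<forall>c.
        Comp C (Smult C c g) f = Smult C c (Comp C g f) \<and>
        Comp C g (Smult C c f) = Smult C c (Comp C g f))"

definition neg :: "('o, 'm, 'k::field, 'z) tcat_scheme \<Rightarrow> 'm \<Rightarrow> 'm" where
  "neg C f = Smult C (-1) f"

definition hsum :: "('o, 'm, 'k, 'z) tcat_scheme \<Rightarrow> 'o \<Rightarrow> 'o \<Rightarrow> 'm list \<Rightarrow> 'm" where
  "hsum C X Y fs = foldr (Add C) fs (Zero C X Y)"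

definition lincomb ::
  "('o, 'm, 'k, 'z) tcat_scheme \<Rightarrow> 'o \<Rightarrow> 'o \<Rightarrow> 'k list \<Rightarrow> 'm list \<Rightarrow> 'm" where
  "lincomb C X Y cs bs = hsum C X Y (map (\<lambda>(c, b). Smult C c b) (zip cs bs))"

definition hom_finite :: "('o, 'm, 'k, 'z) tcat_scheme \<Rightarrow> bool" where
  "hom_finite C \<longleftrightarrow> (\<forall>X Y. \<exists>bs. set bs \<subseteq> hom C X Y \<and>
      (\<forall>f \<in> hom C X Y. \<exists>cs. length cs = length bs \<and> f = lincomb C X Y cs bs))"

definition zero_object :: "('o, 'm, 'k, 'z) tcat_scheme \<Rightarrow> 'o \<Rightarrow> bool" where
  "zero_object C Z \<longleftrightarrow> Ident C Z = Zero C Z Z"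

definition is_biproduct ::
  "('o, 'm, 'k, 'z) tcat_scheme \<Rightarrow> 'o \<Rightarrow> 'o list \<Rightarrow> 'm list \<Rightarrow> 'm list \<Rightarrow> bool" where
  "is_biproduct C X Xs ins prs \<longleftrightarrow>
     length ins = length Xs \<and> length prs = length Xs \<and>
     (\<forall>i < length Xs. ins ! i \<in> hom C (Xs ! i) X \<and> prs ! i \<in> hom C X (Xs ! i)) \<and>
     (\<forall>i < length Xs. \<forall>j < length Xs. Comp C (prs ! i) (ins ! j) =
        (if i = j then Ident C (Xs ! i) else Zero C (Xs ! j) (Xs ! i))) \<and>
     hsum C X X (map (\<lambda>(a, b). Comp C a b) (zip ins prs)) = Ident C X"

definition is_additive :: "('o, 'm, 'k::field, 'z) tcat_scheme \<Rightarrow> bool" where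
  "is_additive C \<longleftrightarrow> is_klinear C \<and> (\<exists>Z. zero_object C Z) \<and>
     (\<forall>X Y. \<exists>S ins prs. is_biproduct C S [X, Y] ins prs)"

definition local_end :: "('o, 'm, 'k::field, 'z) tcat_scheme \<Rightarrow> 'o \<Rightarrow> bool" where
  "local_end C X \<longleftrightarrow> Ident C X \<noteq> Zero C X X \<and>
     (\<forall>f \<in> hom C X X. iso C f \<or> iso C (Add C (Ident C X) (neg C f)))"

definition krull_schmidt :: "('o, 'm, 'k::field, 'z) tcat_scheme \<Rightarrow> bool" where
  "krull_schmidt C \<longleftrightarrow> (\<forall>X. \<exists>Xs ins prs. is_biproduct C X Xs ins prs \<and>
      (\<forall>Y \<in> set Xs. local_end C Y))"

definition triangle_iso ::
  "('o, 'm, 'k, 'z) tcat_scheme \<Rightarrow> ('o \<times> 'o \<times> 'o \<times> 'm \<times> 'm \<times> 'm) \<Rightarrow>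
   ('o \<times> 'o \<times> 'o \<times> 'm \<times> 'm \<times> 'm) \<Rightarrow> bool" where
  "triangle_iso C T T' \<longleftrightarrow> (case T of (X, Y, Z, u, v, w) \<Rightarrow> case T' of (X', Y', Z', u', v', w') \<Rightarrow>
     (\<exists>a b c. a \<in> hom C X X' \<and> b \<in> hom C Y Y' \<and> c \<in> hom C Z Z' \<and>
        iso C a \<and> iso C b \<and> iso C c \<and>
        Comp C b u = Comp C u' a \<and> Comp C c v = Comp C v' b \<and>
        Comp C (ShM C a) w = Comp C w' c))"

definition is_triangle ::
  "('o, 'm, 'k, 'z) tcat_scheme \<Rightarrow> ('o \<times> 'o \<times> 'o \<times> 'm \<times> 'm \<times> 'm) \<Rightarrow> bool" where
  "is_triangle C T \<longleftrightarrow> (case T of (X, Y, Z, u, v, w) \<Rightarrow>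
     u \<in> hom C X Y \<and> v \<in> hom C Y Z \<and> w \<in> hom C Z (ShO C X))"

definition is_triangulated :: "('o, 'm, 'k::field, 'z) tcat_scheme \<Rightarrow> bool" where
  "is_triangulated C \<longleftrightarrow> is_additive C \<and>
     \<comment> \<open>the shift is a k-linear functor\<close>
     (\<forall>f. ShM C f \<in> hom C (ShO C (Dom C f)) (ShO C (Cod C f))) \<and>
     (\<forall>X. ShM C (Ident C X) = Ident C (ShO C X)) \<and>
     (\<forall>f g. Dom C g = Cod C f \<longrightarrow> ShM C (Comp C g f) = Comp C (ShM C g) (ShM C f)) \<and>
     (\<forall>X Y. \<forall>f \<in> hom C X Y. \<forall>g \<in> hom C X Y. ShM C (Add C f g) = Add C (ShM C f) (ShM C g)) \<and>
     (\<forall>f c. ShM C (Smult C c f) = Smult C c (ShM C f)) \<and>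
     \<comment> \<open>which is an equivalence: fully faithful and essentially surjective\<close>
     (\<forall>X Y. bij_betw (ShM C) (hom C X Y) (hom C (ShO C X) (ShO C Y))) \<and>
     (\<forall>Y. \<exists>X f. f \<in> hom C (ShO C X) Y \<and> iso C f) \<and>
     \<comment> \<open>distinguished triangles are triangles\<close>
     (\<forall>T \<in> Tri C. is_triangle C T) \<and>
     \<comment> \<open>TR1\<close>
     (\<forall>T T'. T \<in> Tri C \<longrightarrow> is_triangle C T' \<longrightarrow> triangle_iso C T T' \<longrightarrow> T' \<in> Tri C) \<and>
     (\<forall>X Z. zero_object C Z \<longrightarrow>
        (X, X, Z, Ident C X, Zero C X Z, Zero C Z (ShO C X)) \<in> Tri C) \<and>
     (\<forall>u. \<exists>Z v w. (Dom C u, Cod C u, Z, u, v, w) \<in> Tri C) \<and>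
     \<comment> \<open>TR2 (rotation)\<close>
     (\<forall>X Y Z u v w. (X, Y, Z, u, v, w) \<in> Tri C \<longleftrightarrow>
        is_triangle C (X, Y, Z, u, v, w) \<and>
        (Y, Z, ShO C X, v, w, neg C (ShM C u)) \<in> Tri C) \<and>
     \<comment> \<open>TR3 (morphisms of triangles)\<close>
     (\<forall>X Y Z u v w X' Y' Z' u' v' w' f g.
        (X, Y, Z, u, v, w) \<in> Tri C \<longrightarrow> (X', Y', Z', u', v', w') \<in> Tri C \<longrightarrow>
        f \<in> hom C X X' \<longrightarrow> g \<in> hom C Y Y' \<longrightarrow> Comp C g u = Comp C u' f \<longrightarrow>
        (\<exists>h \<in> hom C Z Z'. Comp C h v = Comp C v' g \<and>
            Comp C (ShM C f) w = Comp C w' h)) \<and>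
     \<comment> \<open>TR4 (octahedral axiom)\<close>
     (\<forall>X Y Z u v Z' j k X' l i Y' m n.
        (X, Y, Z', u, j, k) \<in> Tri C \<longrightarrow> (Y, Z, X', v, l, i) \<in> Tri C \<longrightarrow>
        (X, Z, Y', Comp C v u, m, n) \<in> Tri C \<longrightarrow>
        (\<exists>f g. (Z', Y', X', f, g, Comp C (ShM C j) i) \<in> Tri C \<and>
           Comp C f j = Comp C m v \<and> Comp C n f = k \<and>
           Comp C g m = l \<and> Comp C (ShM C u) n = Comp C i g))"

definition alg_closed_field :: "'k::field itself \<Rightarrow> bool" where
  "alg_closed_field _ \<longleftrightarrow> (\<forall>p :: 'k poly. degree p \<ge> 1 \<longrightarrow> (\<exists>x. poly p x = 0))"

text \<open>An ideal: a subgroup I(X,Y) of each Hom(X,Y), closed under composition with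
  arbitrary morphisms on both sides.  I is encoded as a set of morphisms; I(X,Y) is
  I intersected with hom C X Y.\<close>
definition is_ideal :: "('o, 'm, 'k::field, 'z) tcat_scheme \<Rightarrow> 'm set \<Rightarrow> bool" where
  "is_ideal C I \<longleftrightarrow>
     (\<forall>X Y. Zero C X Y \<in> I \<and>
        (\<forall>f \<in> I \<inter> hom C X Y. \<forall>g \<in> I \<inter> hom C X Y. Add C f g \<in> I) \<and>
        (\<forall>f \<in> I \<inter> hom C X Y. neg C f \<in> I)) \<and>
     (\<forall>f g. Dom C g = Cod C f \<longrightarrow> (f \<in> I \<or> g \<in> I) \<longrightarrow> Comp C g f \<in> I)"

definition left_minimal :: "('o, 'm, 'k, 'z) tcat_scheme \<Rightarrow> 'm \<Rightarrow> bool" where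
  "left_minimal C f \<longleftrightarrow>
     (\<forall>g \<in> hom C (Cod C f) (Cod C f). Comp C g f = f \<longrightarrow> iso C g)"

definition right_minimal :: "('o, 'm, 'k, 'z) tcat_scheme \<Rightarrow> 'm \<Rightarrow> bool" where
  "right_minimal C f \<longleftrightarrow>
     (\<forall>g \<in> hom C (Dom C f) (Dom C f). Comp C f g = f \<longrightarrow> iso C g)"

definition I_source_map :: "('o, 'm, 'k, 'z) tcat_scheme \<Rightarrow> 'm set \<Rightarrow> 'o \<Rightarrow> 'm \<Rightarrow> bool" where
  "I_source_map C I X f \<longleftrightarrow> f \<in> I \<and> Dom C f = X \<and>
     (\<forall>h \<in> I. Dom C h = X \<longrightarrow> (\<exists>g \<in> hom C (Cod C f) (Cod C h). h = Comp C g f)) \<and>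
     left_minimal C f"

definition I_sink_map :: "('o, 'm, 'k, 'z) tcat_scheme \<Rightarrow> 'm set \<Rightarrow> 'o \<Rightarrow> 'm \<Rightarrow> bool" where
  "I_sink_map C I Y f \<longleftrightarrow> f \<in> I \<and> Cod C f = Y \<and>
     (\<forall>h \<in> I. Cod C h = Y \<longrightarrow> (\<exists>g \<in> hom C (Dom C h) (Dom C f). h = Comp C f g)) \<and>
     right_minimal C f"

definition left_I_irreducible :: "('o, 'm, 'k, 'z) tcat_scheme \<Rightarrow> 'm set \<Rightarrow> 'm \<Rightarrow> bool" where
  "left_I_irreducible C I h \<longleftrightarrow> h \<in> I \<and>
     (\<forall>h1 h2. Dom C h1 = Dom C h \<longrightarrow> Cod C h1 = Dom C h2 \<longrightarrow> Cod C h2 = Cod C h \<longrightarrow>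
        h = Comp C h2 h1 \<longrightarrow> h1 \<in> I \<longrightarrow> split_epi C h2)"

definition right_I_irreducible :: "('o, 'm, 'k, 'z) tcat_scheme \<Rightarrow> 'm set \<Rightarrow> 'm \<Rightarrow> bool" where
  "right_I_irreducible C I h \<longleftrightarrow> h \<in> I \<and>
     (\<forall>h1 h2. Dom C h1 = Dom C h \<longrightarrow> Cod C h1 = Dom C h2 \<longrightarrow> Cod C h2 = Cod C h \<longrightarrow>
        h = Comp C h2 h1 \<longrightarrow> h2 \<in> I \<longrightarrow> split_mono C h1)"

end

theory Submission
  imports Defs
begin

text \<open>If an \<open>\<I>\<close>-source map \<open>f\<close> factors as
  \<open>f = h\<^sub>2 h\<^sub>1\<close> with \<open>h\<^sub>1 \<in> \<I>\<close>, then \<open>h\<^sub>1\<close> factors back through \<open>f\<close> as \<open>h\<^sub>1 = g f\<close>,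
  so \<open>f = (h\<^sub>2 g) f\<close>; left minimality makes \<open>h\<^sub>2 g\<close> invertible, hence \<open>h\<^sub>2\<close> is a split
  epimorphism. The statement for sink maps is dual.\<close>

lemma triangulated_imp_category:
  fixes C :: "('o, 'm, 'k::field, 'z) tcat_scheme"
  assumes "is_triangulated C"
  shows "is_category C"
  using assms unfolding is_triangulated_def is_additive_def is_klinear_def by blast

lemma category_comp_in_hom:
  assumes "is_category C" and "Dom C g = Cod C f"
  shows "Comp C g f \<in> hom C (Dom C f) (Cod C g)"
  using assms unfolding is_category_def by blast

lemma category_comp_assoc:
  assumes "is_category C" and "Dom C g = Cod C f" and "Dom C h = Cod C g"
  shows "Comp C h (Comp C g f) = Comp C (Comp C h g) f"
  using assms unfolding is_category_def by blast

lemma split_epi_if_iso_comp: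
  assumes cat: "is_category C" and dom: "Dom C h = Cod C g"
    and iso: "iso C (Comp C h g)"
  shows "split_epi C h"
proof -
  have "Comp C h g \<in> hom C (Dom C g) (Cod C h)"
    using category_comp_in_hom[OF cat dom] .
  then obtain k where k: "k \<in> hom C (Cod C h) (Dom C g)"
    and right_inv: "Comp C (Comp C h g) k = Ident C (Cod C h)"
    using iso unfolding iso_def hom_def by auto
  have k_cod: "Cod C k = Dom C g"
    using k by (simp add: hom_def)
  have "Comp C g k \<in> hom C (Cod C h) (Dom C h)"
    using category_comp_in_hom[OF cat k_cod[symmetric]] k dom by (simp add: hom_def)
  moreover have "Comp C h (Comp C g k) = Ident C (Cod C h)"
    using category_comp_assoc[OF cat k_cod[symmetric] dom] right_inv by simp
  ultimately show ?thesis
    unfolding split_epi_def by blast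
qed

lemma split_mono_if_iso_comp:
  assumes cat: "is_category C" and dom: "Dom C h = Cod C g"
    and iso: "iso C (Comp C h g)"
  shows "split_mono C g"
proof -
  have "Comp C h g \<in> hom C (Dom C g) (Cod C h)"
    using category_comp_in_hom[OF cat dom] .
  then obtain k where k: "k \<in> hom C (Cod C h) (Dom C g)"
    and left_inv: "Comp C k (Comp C h g) = Ident C (Dom C g)"
    using iso unfolding iso_def hom_def by auto
  have k_dom: "Dom C k = Cod C h"
    using k by (simp add: hom_def)
  have "Comp C k h \<in> hom C (Cod C g) (Dom C g)"
    using category_comp_in_hom[OF cat k_dom] k dom by (simp add: hom_def)
  moreover have "Comp C (Comp C k h) g = Ident C (Dom C g)"
    using category_comp_assoc[OF cat dom k_dom] left_inv by simp
  ultimately show ?thesis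
    unfolding split_mono_def by blast
qed

lemma I_source_map_left_I_irreducible:
  assumes cat: "is_category C" and source: "I_source_map C I X f"
  shows "left_I_irreducible C I f"
  unfolding left_I_irreducible_def
proof (intro conjI allI impI)
  show "f \<in> I"
    using source unfolding I_source_map_def by blast
  fix h1 h2
  assume h1_dom: "Dom C h1 = Dom C f" and h1_cod: "Cod C h1 = Dom C h2"
    and h2_cod: "Cod C h2 = Cod C f" and f_eq: "f = Comp C h2 h1" and "h1 \<in> I"
  then obtain g where g: "g \<in> hom C (Cod C f) (Cod C h1)" and h1_eq: "h1 = Comp C g f"
    using source unfolding I_source_map_def by metis
  have g_dom: "Dom C g = Cod C f" and g_cod: "Dom C h2 = Cod C g"
    using g h1_cod by (auto simp: hom_def)
  have "Comp C (Comp C h2 g) f = f"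
    using f_eq h1_eq category_comp_assoc[OF cat g_dom g_cod] by simp
  moreover have "Comp C h2 g \<in> hom C (Cod C f) (Cod C f)"
    using category_comp_in_hom[OF cat g_cod] g_dom h2_cod by simp
  ultimately have "iso C (Comp C h2 g)"
    using source unfolding I_source_map_def left_minimal_def by blast
  then show "split_epi C h2"
    using split_epi_if_iso_comp[OF cat g_cod] by blast
qed

lemma I_sink_map_right_I_irreducible:
  assumes cat: "is_category C" and sink: "I_sink_map C I Y f"
  shows "right_I_irreducible C I f"
  unfolding right_I_irreducible_def
proof (intro conjI allI impI)
  show "f \<in> I"
    using sink unfolding I_sink_map_def by blast
  fix h1 h2
  assume h1_dom: "Dom C h1 = Dom C f" and h1_cod: "Cod C h1 = Dom C h2"
    and h2_cod: "Cod C h2 = Cod C f" and f_eq: "f = Comp C h2 h1" and "h2 \<in> I"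
  then obtain g where g: "g \<in> hom C (Dom C h2) (Dom C f)" and h2_eq: "h2 = Comp C f g"
    using sink unfolding I_sink_map_def by metis
  have g_dom: "Dom C g = Cod C h1" and g_cod: "Cod C g = Dom C f"
    using g h1_cod by (auto simp: hom_def)
  have "Comp C f (Comp C g h1) = f"
    using f_eq h2_eq category_comp_assoc[OF cat g_dom g_cod[symmetric]] by simp
  moreover have "Comp C g h1 \<in> hom C (Dom C f) (Dom C f)"
    using category_comp_in_hom[OF cat g_dom] g_cod h1_dom by simp
  ultimately have "iso C (Comp C g h1)"
    using sink unfolding I_sink_map_def right_minimal_def by blast
  then show "split_mono C h1"
    using split_mono_if_iso_comp[OF cat g_dom] by blast
qed

theorem lemma4p3:
  fixes C :: "('o, 'm, 'k::field) tcat" and I :: "'m set"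
  assumes "alg_closed_field TYPE('k)"
    and "is_triangulated C"
    and "hom_finite C"
    and "krull_schmidt C"
    and "is_ideal C I"
  shows "(\<forall>X f. I_source_map C I X f \<longrightarrow> left_I_irreducible C I f) \<and>
         (\<forall>Y f. I_sink_map C I Y f \<longrightarrow> right_I_irreducible C I f)"
  using I_source_map_left_I_irreducible[OF triangulated_imp_category[OF assms(2)]]
    I_sink_map_right_I_irreducible[OF triangulated_imp_category[OF assms(2)]] by blast

end
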